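(* Let $m$ be a positive integer and let $(a_k)_{k\in\mathbb{Z}}$ be complex numbers with $\sum_{k=-\infty}^{\infty}|k a_k|<\infty$. Define $g(z)=\sum_{k=-\infty}^{\infty}a_k\,\bar z^{k}z^{2m-k}$ for $z\ne0$ and $g(0)=0$. Suppose at least one of the following conditions holds (they are increasingly weaker): (i) there exists an integer $l\le m$ with $|a_l|>\sum_{n\ne l}|a_n|$; (ii) there exists an integer $l\le m$ with $a_l\neq0$ and $\sum_{n=1}^{\infty}\bigl|\frac{a_{l+n}}{a_l}+\frac{\overline{a_{l-n}}}{\overline{a_l}}\bigr|<1$; (iii) there exists an integer $l\le m$ with $a_l\ne0$ and $\operatorname{Re}\Bigl(1+\sum_{n=1}^{\infty}\bigl(\frac{a_{l+n}}{a_l}+\frac{\overline{a_{l-n}}}{\overline{a_l}}\bigr)w^n\Bigr)>0$ for all $|w|=1$. Then $g$ is an even, homogeneous (of degree $2m$) $C^1$ function that satisfies the polynomial condition.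
   Context: Homogeneous of degree $d$ means $g(tz)=t^dg(z)$ for all $t>0$. Polynomial condition: let $g$ be an even $C^1$ function defined near $0\in\mathbb{C}$ with $g(z)=o(z)$ as $z\to0$. We say $g$ satisfies the polynomial condition (with respect to a holomorphic polynomial $p(\zeta_1,\zeta_2)$) if for every $C^1$ function $R$ defined near $0$ with $R(z)=o(g(z))$ as $z\to0$, both $\operatorname{Im} p(z,\bar z+g(z)+R(z))>0$ and $\operatorname{Im} p(z,\bar z-g(z)+R(z))<0$ hold for all $z\neq0$ sufficiently close to $0$; "$g$ satisfies the polynomial condition" means this holds for some polynomial $p$. *)

theory Defs
  imports "HOL-Analysis.Analysis" "HOL-Library.Landau_Symbols"
begin

text \<open>Continuously (real-)differentiable on an open set S, viewing C as R^2:
  the Frechet derivative exists at each point of S and depends continuously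
  (in operator norm) on the point.\<close>
definition C1_on :: "complex set \<Rightarrow> (complex \<Rightarrow> complex) \<Rightarrow> bool" where
  "C1_on S f \<longleftrightarrow> (\<exists>f' :: complex \<Rightarrow> (complex \<Rightarrow>\<^sub>L complex).
      (\<forall>x\<in>S. (f has_derivative blinfun_apply (f' x)) (at x)) \<and> continuous_on S f')"

definition even_fun :: "(complex \<Rightarrow> complex) \<Rightarrow> bool" where
  "even_fun g \<longleftrightarrow> (\<forall>z. g (- z) = g z)"

definition homogeneous_of_degree :: "nat \<Rightarrow> (complex \<Rightarrow> complex) \<Rightarrow> bool" where
  "homogeneous_of_degree d g \<longleftrightarrow> (\<forall>t::real. t > 0 \<longrightarrow> (\<forall>z. g (of_real t * z) = of_real (t ^ d) * g z))"

definition holo_poly2 :: "(complex \<Rightarrow> complex \<Rightarrow> complex) \<Rightarrow> bool" where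
  "holo_poly2 p \<longleftrightarrow> (\<exists>(N::nat) (c::nat \<Rightarrow> nat \<Rightarrow> complex).
      \<forall>z w. p z w = (\<Sum>i\<le>N. \<Sum>j\<le>N. c i j * z ^ i * w ^ j))"

text \<open>Polynomial condition with respect to p (R defined near 0 = C^1 on some ball
  around 0; values elsewhere irrelevant).\<close>
definition polynomial_condition_wrt ::
  "(complex \<Rightarrow> complex) \<Rightarrow> (complex \<Rightarrow> complex \<Rightarrow> complex) \<Rightarrow> bool" where
  "polynomial_condition_wrt g p \<longleftrightarrow>
     (\<forall>R. (\<exists>e>0. C1_on (ball 0 e) R) \<and> R \<in> o[at 0](g) \<longrightarrow>
        (\<forall>\<^sub>F z in at 0. Im (p z (cnj z + g z + R z)) > 0 \<and> Im (p z (cnj z - g z + R z)) < 0))"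

definition satisfies_polynomial_condition :: "(complex \<Rightarrow> complex) \<Rightarrow> bool" where
  "satisfies_polynomial_condition g \<longleftrightarrow>
     even_fun g \<and> (\<exists>e>0. C1_on (ball 0 e) g) \<and> g \<in> o[at 0](\<lambda>z. z) \<and>
     (\<exists>p. holo_poly2 p \<and> polynomial_condition_wrt g p)"

definition gser :: "(int \<Rightarrow> complex) \<Rightarrow> nat \<Rightarrow> complex \<Rightarrow> complex" where
  "gser a m z = (if z = 0 then 0
      else (\<Sum>\<^sub>\<infinity>k\<in>(UNIV::int set). a k * (cnj z) powi k * z powi (int (2 * m) - k)))"

end

theory Submission
  imports Defs "HOL-Library.Nat_Bijection"
begin

text \<open>Each term a_k conj(z)^k z^(2m-k) has modulus |a_k| |z|^(2m), so the series and its termwise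
  Wirtinger derivatives (of degree 2m - 1) converge absolutely and uniformly on bounded sets; hence g
  is C^1, and evenness and homogeneity hold termwise.
  For the polynomial condition put d = 2(m - l) and F(z) = conj(z)^d g(z) / a_l. On the unit circle
  conj z = 1/z turns F into the series sum_k (a_k / a_l) w^(k - l) in w = conj(z)^2, whose real part
  is Re (1 + sum_n b_n w^n) with the coefficients b_n of condition (iii). So Re F > 0 on the circle,
  and by compactness and homogeneity F takes its values in a closed sector Re F >= delta |F|.
  For p(z, w) = c w^(d+1) + conj(c) z^(d+1) with c = i / ((d+1) a_l) one has
  Im p(z, conj z + h) = Re (conj(z)^d h / a_l) + o(|z|^d |h|), and for h = +-g + R with R = o(g)
  the linear term +-Re F dominates.\<close>

section \<open>Series in powers of z and conj z\<close>

definition cnj_powi_series ::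
  "(int \<Rightarrow> complex) \<Rightarrow> (int \<Rightarrow> int) \<Rightarrow> (int \<Rightarrow> int) \<Rightarrow> complex \<Rightarrow> complex" where
  "cnj_powi_series w p q z = (\<Sum>\<^sub>\<infinity>k. w k * cnj z powi p k * z powi q k)"

text \<open>Termwise Wirtinger derivatives d/d(conj z) and d/dz.\<close>

abbreviation cnj_powi_series_dcnj ::
  "(int \<Rightarrow> complex) \<Rightarrow> (int \<Rightarrow> int) \<Rightarrow> (int \<Rightarrow> int) \<Rightarrow> complex \<Rightarrow> complex" where
  "cnj_powi_series_dcnj w p q \<equiv> cnj_powi_series (\<lambda>k. w k * of_int (p k)) (\<lambda>k. p k - 1) q"

abbreviation cnj_powi_series_dz ::
  "(int \<Rightarrow> complex) \<Rightarrow> (int \<Rightarrow> int) \<Rightarrow> (int \<Rightarrow> int) \<Rightarrow> complex \<Rightarrow> complex" where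
  "cnj_powi_series_dz w p q \<equiv> cnj_powi_series (\<lambda>k. w k * of_int (q k)) p (\<lambda>k. q k - 1)"

lemma norm_cnj_powi_mult_powi:
  fixes z :: complex
  assumes "p + q = int n" "n > 0"
  shows "norm (cnj z powi p * z powi q) = norm z ^ n"
proof (cases "z = 0")
  case True
  then show ?thesis
    using assms by (auto simp: power_int_0_left_if)
next
  case False
  then have "norm (cnj z powi p * z powi q) = norm z powi (p + q)"
    by (simp add: norm_mult norm_power_int power_int_add)
  then show ?thesis
    using assms by simp
qed

lemma sums_int_decode:
  fixes f :: "int \<Rightarrow> 'a::banach"
  assumes "f summable_on UNIV"
  shows "(\<lambda>i. f (int_decode i)) sums infsum f UNIV"
proof -
  have summable: "(\<lambda>i. f (int_decode i)) summable_on UNIV"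
    and "(\<Sum>\<^sub>\<infinity>i. f (int_decode i)) = infsum f UNIV"
    using summable_on_reindex[OF inj_int_decode, of f UNIV] infsum_reindex[OF inj_int_decode, of f UNIV]
      assms by (simp_all add: surj_int_decode o_def)
  then show ?thesis
    using has_sum_imp_sums[OF has_sum_infsum[OF summable]] by simp
qed

lemma summable_norm_of_summable_norm_int_mult:
  fixes a :: "int \<Rightarrow> 'a::real_normed_div_algebra"
  assumes "(\<lambda>k. norm (of_int k * a k)) summable_on UNIV"
  shows "(\<lambda>k. norm (a k)) summable_on UNIV"
proof -
  have "(\<lambda>k. norm (a k)) summable_on (UNIV - {0})"
  proof (rule summable_on_comparison_test[OF summable_on_subset[OF assms]])
    fix k :: int assume "k \<in> UNIV - {0}"
    then have "1 \<le> \<bar>real_of_int k\<bar>"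
      by (metis DiffD2 insertI1 of_int_1_le_iff of_int_abs zero_less_abs_iff int_one_le_iff_zero_less)
    from mult_right_mono[OF this norm_ge_zero]
    show "norm (a k) \<le> norm (of_int k * a k)"
      by (simp add: norm_mult)
  qed auto
  then show ?thesis
    using summable_on_insert_iff[of "\<lambda>k. norm (a k)" 0 "UNIV - {0}"] by (simp add: insert_absorb)
qed

context
  fixes w :: "int \<Rightarrow> complex" and p q :: "int \<Rightarrow> int" and n :: nat
  assumes w_summable: "(\<lambda>k. norm (w k)) summable_on UNIV"
    and degree: "\<And>k. p k + q k = int n" and degree_pos: "n > 0"
begin

lemma norm_cnj_powi_term: "norm (w k * cnj z powi p k * z powi q k) = norm (w k) * norm z ^ n"
  using norm_cnj_powi_mult_powi[OF degree degree_pos] by (simp add: norm_mult mult.assoc)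

lemma summable_norm_cnj_powi_terms: "(\<lambda>k. norm (w k * cnj z powi p k * z powi q k)) summable_on UNIV"
  unfolding norm_cnj_powi_term by (intro summable_on_cmult_left w_summable)

lemma cnj_powi_series_sums:
  "(\<lambda>i. w (int_decode i) * cnj z powi p (int_decode i) * z powi q (int_decode i)) sums cnj_powi_series w p q z"
  unfolding cnj_powi_series_def
  by (rule sums_int_decode[OF abs_summable_summable[OF summable_norm_cnj_powi_terms]])

lemma norm_cnj_powi_series_le: "norm (cnj_powi_series w p q z) \<le> (\<Sum>\<^sub>\<infinity>k. norm (w k)) * norm z ^ n"
proof -
  have "norm (cnj_powi_series w p q z) \<le> (\<Sum>\<^sub>\<infinity>k. norm (w k * cnj z powi p k * z powi q k))"
    unfolding cnj_powi_series_def by (rule norm_infsum_bound[OF summable_norm_cnj_powi_terms])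
  also have "\<dots> = (\<Sum>\<^sub>\<infinity>k. norm (w k)) * norm z ^ n"
    unfolding norm_cnj_powi_term by (rule infsum_cmult_left) (use w_summable in simp)
  finally show ?thesis .
qed

lemma cnj_powi_series_0: "cnj_powi_series w p q 0 = 0"
  using norm_cnj_powi_series_le[of 0] degree_pos by (simp add: power_0_left)

lemma cnj_powi_series_scale:
  "cnj_powi_series w p q (of_real t * z) = of_real (t ^ n) * cnj_powi_series w p q z"
proof (cases "t = 0")
  case False
  have "w k * cnj (of_real t * z) powi p k * (of_real t * z) powi q k
        = of_real (t ^ n) * (w k * cnj z powi p k * z powi q k)" for k
  proof -
    have "(of_real t :: complex) powi p k * of_real t powi q k = of_real t powi (p k + q k)"
      using False by (simp add: power_int_add)
    then have "(of_real t :: complex) powi p k * of_real t powi q k = of_real (t ^ n)"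
      by (simp add: degree)
    then show ?thesis
      by (simp add: power_int_mult_distrib mult_ac)
  qed
  then have "cnj_powi_series w p q (of_real t * z)
             = (\<Sum>\<^sub>\<infinity>k. of_real (t ^ n) * (w k * cnj z powi p k * z powi q k))"
    unfolding cnj_powi_series_def by (intro infsum_cong)
  also have "\<dots> = of_real (t ^ n) * cnj_powi_series w p q z"
    unfolding cnj_powi_series_def
    by (intro infsum_cmult_right abs_summable_summable[OF summable_norm_cnj_powi_terms])
  finally show ?thesis .
qed (use degree_pos cnj_powi_series_0 in simp)

lemma uniform_limit_cnj_powi_series:
  "uniform_limit (cball 0 r)
     (\<lambda>N z. \<Sum>i<N. w (int_decode i) * cnj z powi p (int_decode i) * z powi q (int_decode i))
     (cnj_powi_series w p q) sequentially"
proof -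
  have "uniform_limit (cball 0 r)
     (\<lambda>N z. \<Sum>i<N. w (int_decode i) * cnj z powi p (int_decode i) * z powi q (int_decode i))
     (\<lambda>z. \<Sum>i. w (int_decode i) * cnj z powi p (int_decode i) * z powi q (int_decode i)) sequentially"
  proof (rule Weierstrass_m_test)
    show "summable (\<lambda>i. norm (w (int_decode i)) * r ^ n)"
      using sums_int_decode[OF w_summable] by (intro summable_mult2) (auto simp: sums_iff)
  next
    fix i z assume "z \<in> cball (0::complex) r"
    then show "norm (w (int_decode i) * cnj z powi p (int_decode i) * z powi q (int_decode i))
               \<le> norm (w (int_decode i)) * r ^ n"
      unfolding norm_cnj_powi_term by (intro mult_left_mono power_mono) auto
  qed
  then show ?thesis
    using cnj_powi_series_sums by (simp add: sums_iff)
qed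

lemma continuous_on_cnj_powi_series: "continuous_on UNIV (cnj_powi_series w p q)"
  unfolding continuous_on_eq_continuous_at[OF open_UNIV]
proof
  fix z0 :: complex
  show "isCont (cnj_powi_series w p q) z0"
  proof (cases "z0 = 0")
    case True
    have "(cnj_powi_series w p q \<longlongrightarrow> 0) (at 0)"
    proof (rule Lim_null_comparison)
      show "\<forall>\<^sub>F z in at 0. norm (cnj_powi_series w p q z) \<le> (\<Sum>\<^sub>\<infinity>k. norm (w k)) * norm z ^ n"
        by (intro always_eventually allI norm_cnj_powi_series_le)
      show "((\<lambda>z. (\<Sum>\<^sub>\<infinity>k. norm (w k)) * norm z ^ n) \<longlongrightarrow> 0) (at (0::complex))"
        using degree_pos by (auto intro!: tendsto_eq_intros)
    qed
    then show ?thesis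
      using True cnj_powi_series_0 by (simp add: isCont_def)
  next
    case False
    define S :: "complex set" where "S = ball 0 (2 * norm z0) - cball 0 (norm z0 / 2)"
    have "continuous_on S (cnj_powi_series w p q)"
    proof (rule uniform_limit_theorem[OF _ uniform_limit_on_subset[OF uniform_limit_cnj_powi_series]])
      show "\<forall>\<^sub>F N in sequentially. continuous_on S
        (\<lambda>z. \<Sum>i<N. w (int_decode i) * cnj z powi p (int_decode i) * z powi q (int_decode i))"
        using False by (intro always_eventually allI continuous_intros) (auto simp: S_def)
      show "S \<subseteq> cball 0 (2 * norm z0)"
        by (auto simp: S_def)
    qed simp
    moreover have "open S" "z0 \<in> S"
      using False by (auto simp: S_def)
    ultimately show ?thesis
      by (simp add: continuous_on_eq_continuous_at)
  qed
qed

end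

section \<open>Differentiability\<close>

lemma has_derivative_cnj_linear_series:
  fixes f :: "nat \<Rightarrow> complex \<Rightarrow> complex" and S :: "complex set"
  assumes "convex S" and "x \<in> S"
    and "\<And>i y. y \<in> S \<Longrightarrow> (f i has_derivative (\<lambda>v. \<alpha> i y * cnj v + \<beta> i y * v)) (at y within S)"
    and "uniform_limit S (\<lambda>N y. \<Sum>i<N. \<alpha> i y) A sequentially"
    and "uniform_limit S (\<lambda>N y. \<Sum>i<N. \<beta> i y) B sequentially"
    and sums: "\<And>y. y \<in> S \<Longrightarrow> (\<lambda>i. f i y) sums F y"
  shows "(F has_derivative (\<lambda>v. A x * cnj v + B x * v)) (at x within S)"
proof -
  have "\<exists>g. \<forall>y\<in>S. (\<lambda>i. f i y) sums g y \<and> (g has_derivative (\<lambda>v. A y * cnj v + B y * v)) (at y within S)"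
  proof (rule has_derivative_series[OF assms(1,3) _ assms(2) sums[OF assms(2)]])
    fix \<epsilon> :: real assume "\<epsilon> > 0"
    then have "\<epsilon> / 2 > 0"
      by simp
    from uniform_limitD[OF assms(4) this] uniform_limitD[OF assms(5) this]
    show "\<forall>\<^sub>F N in sequentially. \<forall>y\<in>S. \<forall>v.
            norm ((\<Sum>i<N. \<alpha> i y * cnj v + \<beta> i y * v) - (A y * cnj v + B y * v)) \<le> \<epsilon> * norm v"
    proof eventually_elim
      case (elim N)
      show ?case
      proof (intro ballI allI)
        fix y v assume "y \<in> S"
        have "(\<Sum>i<N. \<alpha> i y * cnj v + \<beta> i y * v) - (A y * cnj v + B y * v)
            = ((\<Sum>i<N. \<alpha> i y) - A y) * cnj v + ((\<Sum>i<N. \<beta> i y) - B y) * v"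
          by (simp only: sum.distrib flip: sum_distrib_right) (simp add: algebra_simps)
        then have "norm ((\<Sum>i<N. \<alpha> i y * cnj v + \<beta> i y * v) - (A y * cnj v + B y * v))
            \<le> (norm ((\<Sum>i<N. \<alpha> i y) - A y) + norm ((\<Sum>i<N. \<beta> i y) - B y)) * norm v"
          using norm_triangle_ineq[of "X * cnj v" "Y * v" for X Y] by (simp add: norm_mult distrib_right)
        also have "\<dots> \<le> (\<epsilon> / 2 + \<epsilon> / 2) * norm v"
          using elim \<open>y \<in> S\<close> by (intro mult_right_mono add_mono) (auto simp: dist_norm less_imp_le)
        finally show "norm ((\<Sum>i<N. \<alpha> i y * cnj v + \<beta> i y * v) - (A y * cnj v + B y * v)) \<le> \<epsilon> * norm v"
          by simp
      qed
    qed
  qed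
  then obtain g where g: "\<And>y. y \<in> S \<Longrightarrow> (\<lambda>i. f i y) sums g y"
    and g': "(g has_derivative (\<lambda>v. A x * cnj v + B x * v)) (at x within S)"
    using assms(2) by blast
  show ?thesis
    using has_derivative_transform[OF assms(2) _ g'] g sums sums_unique2 by metis
qed

lemma has_derivative_cnj_powi_mult_powi:
  fixes z c :: complex
  assumes "z \<noteq> 0"
  shows "((\<lambda>z. c * cnj z powi p * z powi q) has_derivative
     (\<lambda>v. c * of_int p * cnj z powi (p - 1) * z powi q * cnj v
        + c * of_int q * cnj z powi p * z powi (q - 1) * v)) (at z within S)"
  using assms
  by (auto intro!: derivative_eq_intros has_derivative_power_int has_derivative_cnj simp: algebra_simps)

lemma smallo_of_power_bound:
  fixes f :: "complex \<Rightarrow> complex"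
  assumes "\<And>z. norm (f z) \<le> C * norm z ^ n" and "n > 1"
  shows "f \<in> o[at 0](\<lambda>z. z)"
proof (rule landau_o.smallI)
  fix c :: real assume "c > 0"
  have "((\<lambda>z::complex. C * norm z ^ (n - 1)) \<longlongrightarrow> 0) (at 0)"
    using assms(2) by (auto intro!: tendsto_eq_intros)
  from order_tendstoD(2)[OF this \<open>c > 0\<close>]
  show "\<forall>\<^sub>F z in at 0. norm (f z) \<le> c * norm z"
  proof eventually_elim
    case (elim z)
    have "norm z ^ n = norm z ^ (n - 1) * norm z"
      using assms(2) by (cases n) (simp_all add: mult.commute)
    then have "norm (f z) \<le> C * norm z ^ (n - 1) * norm z"
      using assms(1)[of z] by (simp add: mult.assoc)
    also have "\<dots> \<le> c * norm z"
      using elim by (intro mult_right_mono) auto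
    finally show ?case .
  qed
qed

lemma has_derivative_zero_of_power_bound:
  fixes f :: "complex \<Rightarrow> complex"
  assumes "\<And>z. norm (f z) \<le> C * norm z ^ n" and "n > 1"
  shows "(f has_derivative (\<lambda>v. 0)) (at 0)"
proof -
  have "f 0 = 0"
    using assms(1)[of 0] assms(2) by (simp add: power_0_left)
  moreover have "((\<lambda>y. f y / y) \<longlongrightarrow> 0) (at 0)"
    by (rule smalloD_tendsto[OF smallo_of_power_bound[OF assms]])
  then have "((\<lambda>y. norm (f y) / norm y) \<longlongrightarrow> 0) (at 0)"
    using tendsto_norm_zero by (fastforce simp: norm_divide)
  ultimately show ?thesis
    by (simp add: has_derivative_iff_norm)
qed

context
  fixes w :: "int \<Rightarrow> complex" and p q :: "int \<Rightarrow> int" and n :: nat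
  assumes w_summable: "(\<lambda>k. norm (w k)) summable_on UNIV"
    and wp_summable: "(\<lambda>k. norm (w k * of_int (p k))) summable_on UNIV"
    and degree: "\<And>k. p k + q k = int n" and degree_gt_1: "n > 1"
begin

private lemma wq_summable: "(\<lambda>k. norm (w k * of_int (q k))) summable_on UNIV"
proof (rule summable_on_comparison_test)
  show "(\<lambda>k. real n * norm (w k) + norm (w k * of_int (p k))) summable_on UNIV"
    by (intro summable_on_add summable_on_cmult_right w_summable wp_summable)
  fix k
  have "\<bar>real_of_int (q k)\<bar> \<le> real n + \<bar>real_of_int (p k)\<bar>"
    using degree[of k] by linarith
  from mult_right_mono[OF this, of "norm (w k)"]
  show "norm (w k * of_int (q k)) \<le> real n * norm (w k) + norm (w k * of_int (p k))"
    by (simp add: norm_mult algebra_simps)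
qed simp

private lemma degree_pos: "n > 0"
  using degree_gt_1 by simp

private lemma degree_dcnj: "(p k - 1) + q k = int (n - 1)" and degree_dz: "p k + (q k - 1) = int (n - 1)"
  and degree_pred_pos: "n - 1 > 0"
  using degree[of k] degree_gt_1 by simp_all

lemma has_derivative_cnj_powi_series_nonzero:
  assumes "z \<noteq> 0"
  shows "(cnj_powi_series w p q has_derivative
     (\<lambda>v. cnj_powi_series_dcnj w p q z * cnj v + cnj_powi_series_dz w p q z * v)) (at z)"
proof -
  define S where "S = ball z (norm z / 2)"
  have S_bounded: "S \<subseteq> cball 0 (2 * norm z)"
    unfolding S_def by (rule order.trans[OF ball_subset_cball]) (simp add: cball_subset_cball_iff)
  have "(cnj_powi_series w p q has_derivative
     (\<lambda>v. cnj_powi_series_dcnj w p q z * cnj v + cnj_powi_series_dz w p q z * v)) (at z within S)"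
  proof (rule has_derivative_cnj_linear_series[where
          f = "\<lambda>i y. w (int_decode i) * cnj y powi p (int_decode i) * y powi q (int_decode i)"])
    show "convex S" "z \<in> S"
      using assms by (auto simp: S_def)
    show "uniform_limit S (\<lambda>N y. \<Sum>i<N. w (int_decode i) * of_int (p (int_decode i))
        * cnj y powi (p (int_decode i) - 1) * y powi q (int_decode i)) (cnj_powi_series_dcnj w p q) sequentially"
      by (rule uniform_limit_on_subset[OF uniform_limit_cnj_powi_series[OF wp_summable degree_dcnj
            degree_pred_pos] S_bounded])
    show "uniform_limit S (\<lambda>N y. \<Sum>i<N. w (int_decode i) * of_int (q (int_decode i))
        * cnj y powi p (int_decode i) * y powi (q (int_decode i) - 1)) (cnj_powi_series_dz w p q) sequentially"
      by (rule uniform_limit_on_subset[OF uniform_limit_cnj_powi_series[OF wq_summable degree_dz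
            degree_pred_pos] S_bounded])
    show "(\<lambda>i. w (int_decode i) * cnj y powi p (int_decode i) * y powi q (int_decode i))
        sums cnj_powi_series w p q y" for y
      by (rule cnj_powi_series_sums[OF w_summable degree degree_pos])
    fix i y assume "y \<in> S"
    then have "y \<noteq> 0"
      by (auto simp: S_def)
    then show "((\<lambda>y. w (int_decode i) * cnj y powi p (int_decode i) * y powi q (int_decode i))
        has_derivative (\<lambda>v. w (int_decode i) * of_int (p (int_decode i))
            * cnj y powi (p (int_decode i) - 1) * y powi q (int_decode i) * cnj v
          + w (int_decode i) * of_int (q (int_decode i))
            * cnj y powi p (int_decode i) * y powi (q (int_decode i) - 1) * v)) (at y within S)"
      by (rule has_derivative_cnj_powi_mult_powi)
  qed
  then show ?thesis
    using assms at_within_open[of z S] by (simp add: S_def)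
qed

lemma has_derivative_cnj_powi_series:
  "(cnj_powi_series w p q has_derivative
     (\<lambda>v. cnj_powi_series_dcnj w p q z * cnj v + cnj_powi_series_dz w p q z * v)) (at z)"
proof (cases "z = 0")
  case True
  have "(cnj_powi_series w p q has_derivative (\<lambda>v. 0)) (at 0)"
    by (rule has_derivative_zero_of_power_bound[OF norm_cnj_powi_series_le[OF w_summable degree degree_pos]
          degree_gt_1])
  then show ?thesis
    using True cnj_powi_series_0[OF wp_summable degree_dcnj degree_pred_pos]
      cnj_powi_series_0[OF wq_summable degree_dz degree_pred_pos] by simp
qed (rule has_derivative_cnj_powi_series_nonzero)

lemma C1_on_cnj_powi_series: "C1_on UNIV (cnj_powi_series w p q)"
  unfolding C1_on_def
proof (intro exI conjI ballI)
  let ?D = "\<lambda>z. (blinfun_mult_right (cnj_powi_series_dcnj w p q z) o\<^sub>L Blinfun cnj)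
     + blinfun_mult_right (cnj_powi_series_dz w p q z)"
  show "(cnj_powi_series w p q has_derivative blinfun_apply (?D z)) (at z)" for z
    by (rule has_derivative_eq_rhs[OF has_derivative_cnj_powi_series])
       (simp add: fun_eq_iff blinfun.add_left bounded_linear_Blinfun_apply[OF bounded_linear_cnj])
  show "continuous_on UNIV ?D"
    by (intro continuous_intros continuous_on_cnj_powi_series[OF wp_summable degree_dcnj degree_pred_pos]
        continuous_on_cnj_powi_series[OF wq_summable degree_dz degree_pred_pos])
qed

end

section \<open>The coefficients of conditions (ii) and (iii)\<close>

lemma sums_symmetric_pairs_int:
  fixes f :: "int \<Rightarrow> 'a::banach"
  assumes "f summable_on UNIV"
  shows "(\<lambda>n. f (l + int (Suc n)) + f (l - int (Suc n))) sums (infsum f UNIV - f l)"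
proof -
  have summable_up: "f summable_on {l<..}" and summable_down: "f summable_on {..<l}"
    using assms by (auto intro: summable_on_subset_banach)
  have "bij_betw (\<lambda>n. l + int (Suc n)) UNIV {l<..}"
    by (rule bij_betwI[where g = "\<lambda>k. nat (k - l - 1)"]) auto
  then have up: "((\<lambda>n. f (l + int (Suc n))) has_sum infsum f {l<..}) UNIV"
    using has_sum_reindex_bij_betw[of _ UNIV _ f] has_sum_infsum[OF summable_up] by blast
  have "bij_betw (\<lambda>n. l - int (Suc n)) UNIV {..<l}"
    by (rule bij_betwI[where g = "\<lambda>k. nat (l - k - 1)"]) auto
  then have down: "((\<lambda>n. f (l - int (Suc n))) has_sum infsum f {..<l}) UNIV"
    using has_sum_reindex_bij_betw[of _ UNIV _ f] has_sum_infsum[OF summable_down] by blast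
  have "(f has_sum (f l + (infsum f {..<l} + infsum f {l<..}))) (insert l ({..<l} \<union> {l<..}))"
    using summable_up summable_down
    by (intro has_sum_insert has_sum_Un_disjoint has_sum_infsum) auto
  moreover have "insert l ({..<l} \<union> {l<..}) = UNIV"
    by auto
  ultimately have "infsum f UNIV = f l + (infsum f {..<l} + infsum f {l<..})"
    by (simp add: infsumI)
  then show ?thesis
    using sums_add[OF has_sum_imp_sums[OF up] has_sum_imp_sums[OF down]] by (simp add: algebra_simps)
qed

lemma cnj_eq_inverse_if_norm_1:
  fixes u :: complex
  assumes "norm u = 1"
  shows "cnj u = inverse u"
  using complex_norm_square[of u] assms by (simp add: inverse_unique)

text \<open>pair_coeff a l n is the coefficient b_(n+1) of conditions (ii) and (iii).\<close>

definition pair_coeff :: "(int \<Rightarrow> complex) \<Rightarrow> int \<Rightarrow> nat \<Rightarrow> complex" where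
  "pair_coeff a l n = a (l + int (Suc n)) / a l + cnj (a (l - int (Suc n))) / cnj (a l)"

lemma norm_pair_coeff_le:
  "norm (pair_coeff a l n) \<le> (norm (a (l + int (Suc n))) + norm (a (l - int (Suc n)))) / norm (a l)"
  unfolding pair_coeff_def add_divide_distrib
  using norm_triangle_ineq[of "a (l + int (Suc n)) / a l" "cnj (a (l - int (Suc n))) / cnj (a l)"]
  by (simp add: norm_divide)

context
  fixes a :: "int \<Rightarrow> complex"
  assumes a_summable: "(\<lambda>k. norm (a k)) summable_on UNIV"
begin

lemma sums_norm_symmetric_pairs:
  "(\<lambda>n. norm (a (l + int (Suc n))) + norm (a (l - int (Suc n)))) sums (\<Sum>\<^sub>\<infinity>k\<in>UNIV - {l}. norm (a k))"
proof -
  have "(\<lambda>k. norm (a k)) summable_on UNIV - {l}"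
    by (rule summable_on_subset_banach[OF a_summable]) simp
  then have "(\<Sum>\<^sub>\<infinity>k. norm (a k)) = norm (a l) + (\<Sum>\<^sub>\<infinity>k\<in>UNIV - {l}. norm (a k))"
    using infsum_insert[of "\<lambda>k. norm (a k)" "UNIV - {l}" l] by (simp add: insert_absorb)
  then show ?thesis
    using sums_symmetric_pairs_int[OF a_summable, of l] by simp
qed

lemma summable_norm_pair_coeff: "summable (\<lambda>n. norm (pair_coeff a l n))"
  by (rule summable_comparison_test'[where N = 0,
        OF summable_divide[OF sums_summable[OF sums_norm_symmetric_pairs[of l]], of "norm (a l)"]])
     (use norm_pair_coeff_le in simp)

lemma summable_pair_coeff_series:
  assumes "norm w = 1"
  shows "summable (\<lambda>n. pair_coeff a l n * w ^ Suc n)"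
  by (rule summable_norm_cancel) (use summable_norm_pair_coeff assms in \<open>simp add: norm_mult norm_power\<close>)

lemma suminf_norm_pair_coeff_lt_1:
  assumes "norm (a l) > (\<Sum>\<^sub>\<infinity>k\<in>UNIV - {l}. norm (a k))"
  shows "(\<Sum>n. norm (pair_coeff a l n)) < 1"
proof -
  have "(\<Sum>n. norm (pair_coeff a l n))
      \<le> (\<Sum>n. (norm (a (l + int (Suc n))) + norm (a (l - int (Suc n)))) / norm (a l))"
    by (intro suminf_le norm_pair_coeff_le summable_norm_pair_coeff
        summable_divide sums_summable[OF sums_norm_symmetric_pairs])
  also have "\<dots> = (\<Sum>\<^sub>\<infinity>k\<in>UNIV - {l}. norm (a k)) / norm (a l)"
    using sums_unique[OF sums_divide[OF sums_norm_symmetric_pairs]] by simp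
  also have "\<dots> < 1"
    using assms le_less_trans[OF infsum_nonneg assms] by simp
  finally show ?thesis .
qed

lemma Re_pair_coeff_series_pos:
  assumes "(\<Sum>n. norm (pair_coeff a l n)) < 1" and "norm w = 1"
  shows "Re (1 + (\<Sum>n. pair_coeff a l n * w ^ Suc n)) > 0"
proof -
  have "summable (\<lambda>n. norm (pair_coeff a l n * w ^ Suc n))"
    using summable_norm_pair_coeff assms(2) by (simp add: norm_mult norm_power)
  then have "norm (\<Sum>n. pair_coeff a l n * w ^ Suc n) \<le> (\<Sum>n. norm (pair_coeff a l n * w ^ Suc n))"
    by (rule summable_norm)
  also have "\<dots> = (\<Sum>n. norm (pair_coeff a l n))"
    using assms(2) by (simp add: norm_mult norm_power)
  finally have "\<bar>Re (\<Sum>n. pair_coeff a l n * w ^ Suc n)\<bar> < 1"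
    using abs_Re_le_cmod assms(1) by (meson le_less_trans)
  then show ?thesis
    by simp
qed

lemma positivity_condition_if_any:
  assumes "(\<exists>l\<le>int m. norm (a l) > (\<Sum>\<^sub>\<infinity>k\<in>UNIV - {l}. norm (a k)))
    \<or> (\<exists>l\<le>int m. a l \<noteq> 0 \<and> (\<Sum>n. norm (pair_coeff a l n)) < 1)
    \<or> (\<exists>l\<le>int m. a l \<noteq> 0 \<and> (\<forall>w. norm w = 1 \<longrightarrow> Re (1 + (\<Sum>n. pair_coeff a l n * w ^ Suc n)) > 0))"
  obtains l where "l \<le> int m" "a l \<noteq> 0" "\<And>w. norm w = 1 \<Longrightarrow> Re (1 + (\<Sum>n. pair_coeff a l n * w ^ Suc n)) > 0"
  using assms
proof (elim disjE exE conjE)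
  fix l assume "l \<le> int m" and dominant: "norm (a l) > (\<Sum>\<^sub>\<infinity>k\<in>UNIV - {l}. norm (a k))"
  moreover have "a l \<noteq> 0"
    using dominant infsum_nonneg[of "UNIV - {l}" "\<lambda>k. norm (a k)"] by auto
  ultimately show thesis
    using that Re_pair_coeff_series_pos[OF suminf_norm_pair_coeff_lt_1[OF dominant]] by blast
qed (use that Re_pair_coeff_series_pos in blast)+

lemma Re_infsum_unit_circle:
  assumes "a l \<noteq> 0" "norm \<omega> = 1"
  shows "Re (\<Sum>\<^sub>\<infinity>k. a k / a l * \<omega> powi (k - l)) = Re (1 + (\<Sum>n. pair_coeff a l n * \<omega> ^ Suc n))"
proof -
  define f where "f = (\<lambda>k. a k / a l * \<omega> powi (k - l))"
  have "(\<lambda>k. norm (f k)) summable_on UNIV"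
    using summable_on_cmult_left[OF a_summable, of "inverse (norm (a l))"] assms(2)
    by (simp add: f_def norm_mult norm_divide norm_inverse norm_power_int divide_inverse)
  then have f_summable: "f summable_on UNIV"
    by (rule abs_summable_summable)
  have pairs: "Re (f (l + int (Suc n)) + f (l - int (Suc n))) = Re (pair_coeff a l n * \<omega> ^ Suc n)" for n
  proof -
    have up: "f (l + int (Suc n)) = a (l + int (Suc n)) / a l * \<omega> ^ Suc n"
      by (simp add: f_def flip: power_int_of_nat)
    have "l - int (Suc n) - l = - int (Suc n)"
      by simp
    then have "\<omega> powi (l - int (Suc n) - l) = inverse (\<omega> ^ Suc n)"
      by (simp only: power_int_minus power_int_of_nat)
    also have "\<dots> = cnj (\<omega> ^ Suc n)"
      using cnj_eq_inverse_if_norm_1[of "\<omega> ^ Suc n"] assms(2) by (simp add: norm_mult norm_power)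
    finally have "f (l - int (Suc n)) = cnj (cnj (a (l - int (Suc n))) / cnj (a l) * \<omega> ^ Suc n)"
      by (simp add: f_def)
    then have down: "Re (f (l - int (Suc n))) = Re (cnj (a (l - int (Suc n))) / cnj (a l) * \<omega> ^ Suc n)"
      by (simp only: cnj.sel(1))
    show ?thesis
      using up down by (simp only: pair_coeff_def distrib_right plus_complex.sel(1))
  qed
  have "f l = 1"
    using assms(1) by (simp add: f_def)
  then have "(\<lambda>n. f (l + int (Suc n)) + f (l - int (Suc n))) sums (infsum f UNIV - 1)"
    using sums_symmetric_pairs_int[OF f_summable, of l] by (simp only:)
  from sums_Re[OF this]
  have "(\<lambda>n. Re (pair_coeff a l n * \<omega> ^ Suc n)) sums Re (infsum f UNIV - 1)"
    by (simp only: pairs)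
  from sums_unique2[OF this sums_Re[OF summable_sums[OF summable_pair_coeff_series[OF assms(2)]]]]
  show ?thesis
    unfolding f_def[symmetric] by simp
qed

end

lemma cnj_powi_series_unit_circle:
  fixes u :: complex
  assumes "norm u = 1" "l \<le> int m"
  shows "cnj u ^ (2 * nat (int m - l)) * cnj_powi_series a (\<lambda>k. k) (\<lambda>k. int (2 * m) - k) u / a l
    = (\<Sum>\<^sub>\<infinity>k. a k / a l * (cnj u ^ 2) powi (k - l))"
proof -
  have u0: "u \<noteq> 0"
    using assms(1) by auto
  have inv: "cnj u = inverse u"
    by (rule cnj_eq_inverse_if_norm_1[OF assms(1)])
  have term_eq: "cnj u ^ (2 * nat (int m - l)) * (c * cnj u powi k * u powi (int (2 * m) - k))
      = c * (cnj u ^ 2) powi (k - l)" for c k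
  proof -
    have e1: "cnj u ^ (2 * nat (int m - l)) = inverse (u powi (2 * (int m - l)))"
      using assms(2) by (simp add: inv power_int_inverse power_int_mult flip: power_int_of_nat)
    have e2: "cnj u powi k = inverse (u powi k)"
      by (simp add: inv power_int_inverse)
    have "(cnj u ^ 2) powi (k - l) = cnj u powi (2 * (k - l))"
      by (simp only: power_int_mult power_int_numeral)
    then have e3: "(cnj u ^ 2) powi (k - l) = inverse (u powi (2 * (k - l)))"
      by (simp add: inv power_int_inverse)
    have "int (2 * m) - k + 2 * (k - l) = 2 * (int m - l) + k"
      by simp
    then have "u powi (int (2 * m) - k) * u powi (2 * (k - l)) = u powi (2 * (int m - l)) * u powi k"
      using u0 by (metis power_int_add)
    then show ?thesis
      unfolding e1 e2 e3 using u0 by (simp add: field_simps)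
  qed
  have "(\<Sum>\<^sub>\<infinity>k. a k / a l * cnj u powi k * u powi (int (2 * m) - k))
      = (\<Sum>\<^sub>\<infinity>k. a k * cnj u powi k * u powi (int (2 * m) - k)) / a l"
    by (simp only: divide_inverse flip: infsum_cmult_left') (simp add: mult_ac)
  then have "cnj u ^ (2 * nat (int m - l)) * cnj_powi_series a (\<lambda>k. k) (\<lambda>k. int (2 * m) - k) u / a l
      = cnj u ^ (2 * nat (int m - l)) * (\<Sum>\<^sub>\<infinity>k. a k / a l * cnj u powi k * u powi (int (2 * m) - k))"
    by (simp add: cnj_powi_series_def)
  also have "\<dots> = (\<Sum>\<^sub>\<infinity>k. a k / a l * (cnj u ^ 2) powi (k - l))"
    unfolding infsum_cmult_right'[symmetric] term_eq ..
  finally show ?thesis .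
qed

section \<open>The sector condition and the polynomial\<close>

lemma homogeneous_sector_bound:
  fixes F :: "complex \<Rightarrow> complex"
  assumes hom: "homogeneous_of_degree K F" and cont: "continuous_on (sphere 0 1) F"
    and pos: "\<And>u. norm u = 1 \<Longrightarrow> Re (F u) > 0"
  obtains \<delta> where "\<delta> > 0" "\<And>z. z \<noteq> 0 \<Longrightarrow> F z \<noteq> 0 \<and> \<delta> * norm (F z) \<le> Re (F z)"
proof -
  have nonzero: "F u \<noteq> 0" if "u \<in> sphere 0 1" for u
    using pos[of u] that by auto
  have "continuous_on (sphere 0 1) (\<lambda>u. Re (F u) / norm (F u))"
    using nonzero by (intro continuous_intros cont) auto
  then obtain u0 where u0: "u0 \<in> sphere 0 1"
    and min: "\<And>u. u \<in> sphere 0 1 \<Longrightarrow> Re (F u0) / norm (F u0) \<le> Re (F u) / norm (F u)"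
    using continuous_attains_inf[OF compact_sphere, of 0 1] by fastforce
  show ?thesis
  proof
    show "Re (F u0) / norm (F u0) > 0"
      using pos[of u0] u0 nonzero[OF u0] by simp
    fix z :: complex assume "z \<noteq> 0"
    define u where "u = z / of_real (norm z)"
    have u: "u \<in> sphere 0 1"
      using \<open>z \<noteq> 0\<close> by (simp add: u_def norm_divide)
    have "z = of_real (norm z) * u"
      using \<open>z \<noteq> 0\<close> by (simp add: u_def)
    then have Fz: "F z = of_real (norm z ^ K) * F u"
      using hom \<open>z \<noteq> 0\<close> unfolding homogeneous_of_degree_def by (metis zero_less_norm_iff)
    have "Re (F u0) / norm (F u0) * norm (F u) \<le> Re (F u)"
      using min[OF u] nonzero[OF u] by (simp add: le_divide_eq)
    from mult_left_mono[OF this, of "norm z ^ K"]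
    show "F z \<noteq> 0 \<and> Re (F u0) / norm (F u0) * norm (F z) \<le> Re (F z)"
      using nonzero[OF u] \<open>z \<noteq> 0\<close> by (simp add: Fz norm_mult norm_power mult_ac)
  qed
qed

definition power_remainder :: "nat \<Rightarrow> 'a::real_normed_field \<Rightarrow> 'a \<Rightarrow> 'a" where
  "power_remainder N x h = (x + h) ^ N - x ^ N - of_nat N * x ^ (N - 1) * h"

lemma power_remainder_eq:
  fixes x y :: "'a::real_normed_field"
  assumes "y \<noteq> 0" "N > 0"
  shows "power_remainder N x (x * y) = x ^ N * y * (((1 + y) ^ N - 1) / y - of_nat N)"
proof -
  have "x ^ N = x ^ (N - 1) * x"
    using \<open>N > 0\<close> by (cases N) simp_all
  then have "x + x * y = x * (1 + y)" "of_nat N * x ^ (N - 1) * (x * y) = of_nat N * (x ^ N * y)"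
    by (simp_all add: algebra_simps)
  then have "power_remainder N x (x * y) = x ^ N * (1 + y) ^ N - x ^ N - of_nat N * (x ^ N * y)"
    by (simp only: power_remainder_def power_mult_distrib)
  also have "\<dots> = x ^ N * y * (((1 + y) ^ N - 1) / y - of_nat N)"
    using \<open>y \<noteq> 0\<close> by (simp add: field_simps)
  finally show ?thesis .
qed

lemma power_linearization:
  fixes \<epsilon> :: real and N :: nat
  assumes "\<epsilon> > 0"
  obtains \<eta> where "\<eta> > 0"
    "\<And>x h :: 'a::real_normed_field. norm h \<le> \<eta> * norm x \<Longrightarrow>
       norm (power_remainder N x h) \<le> \<epsilon> * norm x ^ (N - 1) * norm h"
proof -
  have "((\<lambda>y::'a. (1 + y) ^ N) has_field_derivative of_nat N) (at 0)"
    by (auto intro!: derivative_eq_intros)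
  then have "((\<lambda>y::'a. ((1 + y) ^ N - 1) / y) \<longlongrightarrow> of_nat N) (at 0)"
    by (simp add: has_field_derivative_iff)
  from LIM_D[OF this assms] obtain \<eta> where "\<eta> > 0"
    and \<eta>: "\<And>y::'a. y \<noteq> 0 \<Longrightarrow> norm y < \<eta> \<Longrightarrow> norm (((1 + y) ^ N - 1) / y - of_nat N) < \<epsilon>"
    by auto
  show ?thesis
  proof
    show "\<eta> / 2 > 0"
      using \<open>\<eta> > 0\<close> by simp
    fix x h :: 'a assume h: "norm h \<le> \<eta> / 2 * norm x"
    show "norm (power_remainder N x h) \<le> \<epsilon> * norm x ^ (N - 1) * norm h"
    proof (cases "N = 0 \<or> h = 0")
      case False
      then have "x \<noteq> 0" "h / x \<noteq> 0" "N > 0"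
        using h by auto
      have "norm (h / x) \<le> \<eta> / 2"
        using h \<open>x \<noteq> 0\<close> by (simp add: norm_divide pos_divide_le_eq)
      with \<open>\<eta> > 0\<close> have "norm (h / x) < \<eta>"
        by linarith
      have "power_remainder N x h = x ^ N * (h / x) * (((1 + h / x) ^ N - 1) / (h / x) - of_nat N)"
        using power_remainder_eq[OF \<open>h / x \<noteq> 0\<close> \<open>N > 0\<close>, of x] \<open>x \<noteq> 0\<close> by simp
      moreover have "norm (x ^ N * (h / x)) = norm x ^ (N - 1) * norm h"
        using \<open>x \<noteq> 0\<close> \<open>N > 0\<close> by (cases N) (simp_all add: norm_mult norm_divide norm_power)
      ultimately have "norm (power_remainder N x h)
          = norm x ^ (N - 1) * norm h * norm (((1 + h / x) ^ N - 1) / (h / x) - of_nat N)"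
        by (simp only: norm_mult)
      also have "\<dots> \<le> norm x ^ (N - 1) * norm h * \<epsilon>"
        using \<eta>[OF \<open>h / x \<noteq> 0\<close> \<open>norm (h / x) < \<eta>\<close>] by (intro mult_left_mono) auto
      finally show ?thesis
        by (simp add: mult_ac)
    qed (use assms in \<open>auto simp: power_remainder_def\<close>)
  qed
qed

definition sector_poly :: "complex \<Rightarrow> nat \<Rightarrow> complex \<Rightarrow> complex \<Rightarrow> complex" where
  "sector_poly \<alpha> d z w =
     \<i> / (of_nat (Suc d) * \<alpha>) * w ^ Suc d + cnj (\<i> / (of_nat (Suc d) * \<alpha>)) * z ^ Suc d"

lemma Im_sector_poly:
  assumes "\<alpha> \<noteq> 0"
  shows "Im (sector_poly \<alpha> d z (cnj z + h))
    = Re (cnj z ^ d * h / \<alpha>) + Im (\<i> / (of_nat (Suc d) * \<alpha>) * power_remainder (Suc d) (cnj z) h)"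
proof -
  define c where "c = \<i> / (of_nat (Suc d) * \<alpha>)"
  have expand: "sector_poly \<alpha> d z (cnj z + h) = c * power_remainder (Suc d) (cnj z) h
      + \<i> * (cnj z ^ d * h / \<alpha>) + (c * cnj z ^ Suc d + cnj (c * cnj z ^ Suc d))"
    using assms by (simp add: sector_poly_def power_remainder_def c_def field_simps del: of_nat_Suc)
  have Im_eq: "Im (u + \<i> * v + (y + cnj y)) = Im u + Re v" for u v y
    by simp
  show ?thesis
    unfolding c_def[symmetric] expand Im_eq by (rule add.commute)
qed

lemma sector_poly_error_le:
  assumes "\<alpha> \<noteq> 0" "\<delta> > 0"
    and "norm R \<le> \<delta> / 4 * norm G" "norm h \<le> 2 * norm G"
    and remainder: "norm (power_remainder (Suc d) (cnj z) h) \<le> of_nat (Suc d) * \<delta> / 8 * norm z ^ d * norm h"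
  shows "\<bar>Re (cnj z ^ d * R / \<alpha>) + Im (\<i> / (of_nat (Suc d) * \<alpha>) * power_remainder (Suc d) (cnj z) h)\<bar>
    \<le> \<delta> * norm (cnj z ^ d * G / \<alpha>) / 2"
proof -
  define W where "W = cnj z ^ d * G / \<alpha>"
  have norm_W: "norm W = norm z ^ d * norm G / norm \<alpha>"
    by (simp add: W_def norm_mult norm_divide norm_power)
  from remainder \<open>norm h \<le> 2 * norm G\<close>
  have "norm (power_remainder (Suc d) (cnj z) h) \<le> of_nat (Suc d) * \<delta> / 8 * norm z ^ d * (2 * norm G)"
    using \<open>\<delta> > 0\<close> by (elim order.trans mult_left_mono) simp
  then have "norm (\<i> / (of_nat (Suc d) * \<alpha>) * power_remainder (Suc d) (cnj z) h)
      \<le> norm (\<i> / (of_nat (Suc d) * \<alpha>)) * (of_nat (Suc d) * \<delta> / 8 * norm z ^ d * (2 * norm G))"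
    unfolding norm_mult by (rule mult_left_mono) simp
  also have "\<dots> = \<delta> * norm W / 4"
    using \<open>\<alpha> \<noteq> 0\<close> by (simp add: norm_W norm_divide norm_mult field_simps del: of_nat_Suc)
  finally have err_E: "norm (\<i> / (of_nat (Suc d) * \<alpha>) * power_remainder (Suc d) (cnj z) h) \<le> \<delta> * norm W / 4" .
  have "norm (cnj z ^ d * R / \<alpha>) = norm z ^ d * norm R / norm \<alpha>"
    by (simp add: norm_mult norm_divide norm_power)
  also have "\<dots> \<le> norm z ^ d * (\<delta> / 4 * norm G) / norm \<alpha>"
    using \<open>norm R \<le> \<delta> / 4 * norm G\<close> by (intro divide_right_mono mult_left_mono) auto
  also have "\<dots> = \<delta> * norm W / 4"
    by (simp add: norm_W mult_ac)
  finally have err_R: "norm (cnj z ^ d * R / \<alpha>) \<le> \<delta> * norm W / 4" .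
  show ?thesis
    using abs_Re_le_cmod[of "cnj z ^ d * R / \<alpha>"]
      abs_Im_le_cmod[of "\<i> / (of_nat (Suc d) * \<alpha>) * power_remainder (Suc d) (cnj z) h"]
      abs_triangle_ineq err_R err_E unfolding W_def[symmetric] by argo
qed

lemma sector_poly_sign:
  fixes s \<delta> :: real
  assumes "\<alpha> \<noteq> 0" "\<delta> > 0" "\<bar>s\<bar> = 1" "z \<noteq> 0" "G \<noteq> 0"
    and sector: "\<delta> * norm (cnj z ^ d * G / \<alpha>) \<le> Re (cnj z ^ d * G / \<alpha>)"
    and R_small: "norm R \<le> \<delta> / 4 * norm G" "norm R \<le> norm G"
    and h: "h = of_real s * G + R"
    and remainder: "norm (power_remainder (Suc d) (cnj z) h) \<le> of_nat (Suc d) * \<delta> / 8 * norm z ^ d * norm h"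
  shows "s * Im (sector_poly \<alpha> d z (cnj z + h)) > 0"
proof -
  define W where "W = cnj z ^ d * G / \<alpha>"
  define err where "err = Re (cnj z ^ d * R / \<alpha>)
    + Im (\<i> / (of_nat (Suc d) * \<alpha>) * power_remainder (Suc d) (cnj z) h)"
  have "norm h \<le> 2 * norm G"
    using norm_triangle_ineq[of "of_real s * G" "R"] R_small(2) \<open>\<bar>s\<bar> = 1\<close> by (simp add: h norm_mult)
  with sector_poly_error_le[OF \<open>\<alpha> \<noteq> 0\<close> \<open>\<delta> > 0\<close> R_small(1) _ remainder]
  have "\<bar>s * err\<bar> \<le> \<delta> * norm W / 2"
    by (simp add: abs_mult \<open>\<bar>s\<bar> = 1\<close> err_def W_def)
  have "cnj z ^ d * h / \<alpha> = of_real s * W + cnj z ^ d * R / \<alpha>"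
    by (simp add: h W_def algebra_simps add_divide_distrib)
  then have "Im (sector_poly \<alpha> d z (cnj z + h)) = s * Re W + err"
    unfolding Im_sector_poly[OF \<open>\<alpha> \<noteq> 0\<close>] err_def by simp
  then have "s * Im (sector_poly \<alpha> d z (cnj z + h)) = (s * s) * Re W + s * err"
    by (simp only: distrib_left mult.assoc)
  also have "s * s = 1"
    using abs_mult_self_eq[of s] \<open>\<bar>s\<bar> = 1\<close> by simp
  finally have "s * Im (sector_poly \<alpha> d z (cnj z + h)) = Re W + s * err"
    by simp
  moreover have "\<delta> * norm W \<le> Re W"
    using sector by (simp add: W_def)
  moreover have "\<delta> * norm W > 0"
    using assms(1,2,4,5) by (simp add: W_def)
  ultimately show ?thesis
    using \<open>\<bar>s * err\<bar> \<le> \<delta> * norm W / 2\<close> by linarith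
qed

lemma polynomial_condition_wrt_sector_poly:
  fixes g :: "complex \<Rightarrow> complex"
  assumes "\<alpha> \<noteq> 0" "\<delta> > 0" and g_small: "g \<in> o[at 0](\<lambda>z. z)"
    and sector: "\<forall>\<^sub>F z in at 0. g z \<noteq> 0 \<and> \<delta> * norm (cnj z ^ d * g z / \<alpha>) \<le> Re (cnj z ^ d * g z / \<alpha>)"
  shows "polynomial_condition_wrt g (sector_poly \<alpha> d)"
  unfolding polynomial_condition_wrt_def
proof (intro allI impI, elim conjE)
  fix R :: "complex \<Rightarrow> complex"
  assume R_small: "R \<in> o[at 0](g)"
  obtain \<eta> where "\<eta> > 0" and remainder: "\<And>x h :: complex. norm h \<le> \<eta> * norm x \<Longrightarrow>
      norm (power_remainder (Suc d) x h) \<le> of_nat (Suc d) * \<delta> / 8 * norm x ^ d * norm h"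
    using power_linearization[of "of_nat (Suc d) * \<delta> / 8" "Suc d"] \<open>\<delta> > 0\<close> by auto
  have signed: "\<forall>\<^sub>F z in at 0. s * Im (sector_poly \<alpha> d z (cnj z + (of_real s * g z + R z))) > 0"
    if "\<bar>s\<bar> = 1" for s
  proof -
    have "\<forall>\<^sub>F z in at 0. norm (R z) \<le> \<delta> / 4 * norm (g z)" "\<forall>\<^sub>F z in at 0. norm (R z) \<le> 1 * norm (g z)"
      using \<open>\<delta> > 0\<close> by (intro landau_o.smallD[OF R_small]; simp)+
    moreover have "\<forall>\<^sub>F z in at 0. norm (g z) \<le> \<eta> / 2 * norm z"
      using \<open>\<eta> > 0\<close> by (intro landau_o.smallD[OF g_small]) simp
    moreover have "\<forall>\<^sub>F z in at 0. z \<noteq> 0"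
      by (simp add: eventually_at_filter)
    ultimately show ?thesis
      using sector
    proof eventually_elim
      case (elim z)
      have "norm (of_real s * g z + R z) \<le> \<eta> * norm (cnj z)"
        using norm_triangle_ineq[of "of_real s * g z" "R z"] elim(2,3) \<open>\<bar>s\<bar> = 1\<close> by (simp add: norm_mult)
      from remainder[OF this] have rem: "norm (power_remainder (Suc d) (cnj z) (of_real s * g z + R z))
        \<le> of_nat (Suc d) * \<delta> / 8 * norm z ^ d * norm (of_real s * g z + R z)"
        by (simp only: complex_mod_cnj)
      show ?case
        using elim(5) by (intro sector_poly_sign[OF \<open>\<alpha> \<noteq> 0\<close> \<open>\<delta> > 0\<close> that elim(4) _ _ elim(1)
              elim(2)[unfolded mult_1] refl rem]) simp_all
    qed
  qed
  show "\<forall>\<^sub>F z in at 0. Im (sector_poly \<alpha> d z (cnj z + g z + R z)) > 0 \<and>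
      Im (sector_poly \<alpha> d z (cnj z - g z + R z)) < 0"
  proof (rule eventually_conj)
    show "\<forall>\<^sub>F z in at 0. Im (sector_poly \<alpha> d z (cnj z + g z + R z)) > 0"
      using signed[of 1] by (simp add: add.assoc)
    show "\<forall>\<^sub>F z in at 0. Im (sector_poly \<alpha> d z (cnj z - g z + R z)) < 0"
      using signed[of "-1"] by (simp add: algebra_simps)
  qed
qed

lemma holo_poly2_sector_poly: "holo_poly2 (sector_poly \<alpha> d)"
proof -
  define c where "c = \<i> / (of_nat (Suc d) * \<alpha>)"
  define coeff where "coeff i j = of_bool (i = 0 \<and> j = Suc d) * c + of_bool (i = Suc d \<and> j = 0) * cnj c"
    for i j :: nat
  have "(\<Sum>j\<le>Suc d. coeff i j * z ^ i * w ^ j) = of_bool (i = 0) * (c * w ^ Suc d) + of_bool (i = Suc d) * (cnj c * z ^ Suc d)"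
    for i and z w :: complex
    by (cases "i = 0") (simp_all add: coeff_def sum.distrib distrib_right mult.assoc del: sum.atMost_Suc)
  then have sum_eq: "(\<Sum>i\<le>Suc d. \<Sum>j\<le>Suc d. coeff i j * z ^ i * w ^ j) = c * w ^ Suc d + cnj c * z ^ Suc d"
    for z w
    by (simp add: sum.distrib del: sum.atMost_Suc)
  have "sector_poly \<alpha> d z w = c * w ^ Suc d + cnj c * z ^ Suc d" for z w
    unfolding sector_poly_def c_def ..
  then show ?thesis
    unfolding holo_poly2_def by (intro exI[of _ "Suc d"] exI[of _ coeff] allI) (simp only: sum_eq)
qed
section \<open>The series g\<close>

lemma C1_on_subset: "C1_on S f \<Longrightarrow> T \<subseteq> S \<Longrightarrow> C1_on T f"
  unfolding C1_on_def by (meson continuous_on_subset subsetD)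

context
  fixes a :: "int \<Rightarrow> complex" and m :: nat
  assumes weighted_summable: "(\<lambda>k. norm (of_int k * a k)) summable_on UNIV" and m_pos: "m > 0"
begin

private lemma a_summable: "(\<lambda>k. norm (a k)) summable_on UNIV"
  by (rule summable_norm_of_summable_norm_int_mult[OF weighted_summable])

private lemma gser_degree: "\<And>k. k + (int (2 * m) - k) = int (2 * m)" "2 * m > 0" "2 * m > 1"
  using m_pos by auto

lemma gser_eq_cnj_powi_series: "gser a m = cnj_powi_series a (\<lambda>k. k) (\<lambda>k. int (2 * m) - k)"
  using cnj_powi_series_0[where p = "\<lambda>k. k" and q = "\<lambda>k. int (2 * m) - k",
      OF a_summable gser_degree(1,2)]
  by (auto simp: fun_eq_iff gser_def cnj_powi_series_def)

lemma norm_gser_le: "norm (gser a m z) \<le> (\<Sum>\<^sub>\<infinity>k. norm (a k)) * norm z ^ (2 * m)"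
  unfolding gser_eq_cnj_powi_series
  by (rule norm_cnj_powi_series_le[where p = "\<lambda>k. k" and q = "\<lambda>k. int (2 * m) - k",
        OF a_summable gser_degree(1,2)])

lemma homogeneous_gser: "homogeneous_of_degree (2 * m) (gser a m)"
  unfolding homogeneous_of_degree_def gser_eq_cnj_powi_series
  using cnj_powi_series_scale[where p = "\<lambda>k. k" and q = "\<lambda>k. int (2 * m) - k",
      OF a_summable gser_degree(1,2)]
  by blast

lemma even_gser: "even_fun (gser a m)"
  unfolding even_fun_def gser_eq_cnj_powi_series
  using cnj_powi_series_scale[where p = "\<lambda>k. k" and q = "\<lambda>k. int (2 * m) - k" and t = "-1",
      OF a_summable gser_degree(1,2)]
  by simp

lemma continuous_on_gser: "continuous_on UNIV (gser a m)"
  unfolding gser_eq_cnj_powi_series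
  by (rule continuous_on_cnj_powi_series[OF a_summable gser_degree(1,2)])

lemma C1_on_gser: "C1_on UNIV (gser a m)"
  unfolding gser_eq_cnj_powi_series
  by (rule C1_on_cnj_powi_series[OF a_summable _ gser_degree(1,3)])
     (use weighted_summable in \<open>simp add: mult.commute\<close>)

lemma smallo_gser: "gser a m \<in> o[at 0](\<lambda>z. z)"
  by (rule smallo_of_power_bound[OF norm_gser_le gser_degree(3)])

lemma gser_sector_bound:
  assumes "l \<le> int m" "a l \<noteq> 0"
    and positive: "\<And>w. norm w = 1 \<Longrightarrow> Re (1 + (\<Sum>n. pair_coeff a l n * w ^ Suc n)) > 0"
  shows "\<exists>\<delta>>0. \<forall>\<^sub>F z in at 0. gser a m z \<noteq> 0 \<and>
      \<delta> * norm (cnj z ^ (2 * nat (int m - l)) * gser a m z / a l)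
        \<le> Re (cnj z ^ (2 * nat (int m - l)) * gser a m z / a l)"
proof -
  define F where "F z = cnj z ^ (2 * nat (int m - l)) * gser a m z / a l" for z
  have F_homogeneous: "homogeneous_of_degree (2 * nat (int m - l) + 2 * m) F"
    using homogeneous_gser by (simp add: homogeneous_of_degree_def F_def power_add power_mult_distrib)
  have F_continuous: "continuous_on (sphere 0 1) F"
    unfolding F_def using \<open>a l \<noteq> 0\<close>
    by (intro continuous_intros continuous_on_subset[OF continuous_on_gser]) auto
  have F_positive: "Re (F u) > 0" if "norm u = 1" for u
  proof -
    have "norm (cnj u ^ 2) = 1"
      using that by (simp add: norm_power)
    have "F u = (\<Sum>\<^sub>\<infinity>k. a k / a l * (cnj u ^ 2) powi (k - l))"
      unfolding F_def gser_eq_cnj_powi_series by (rule cnj_powi_series_unit_circle[OF that \<open>l \<le> int m\<close>])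
    also have "Re \<dots> = Re (1 + (\<Sum>n. pair_coeff a l n * (cnj u ^ 2) ^ Suc n))"
      by (rule Re_infsum_unit_circle[OF a_summable \<open>a l \<noteq> 0\<close> \<open>norm (cnj u ^ 2) = 1\<close>])
    finally show ?thesis
      using positive[OF \<open>norm (cnj u ^ 2) = 1\<close>] by simp
  qed
  obtain \<delta> where "\<delta> > 0" and sector: "\<And>z. z \<noteq> 0 \<Longrightarrow> F z \<noteq> 0 \<and> \<delta> * norm (F z) \<le> Re (F z)"
    using homogeneous_sector_bound[OF F_homogeneous F_continuous F_positive] by blast
  have "\<forall>\<^sub>F z in at 0. z \<noteq> 0"
    by (simp add: eventually_at_filter)
  then have "\<forall>\<^sub>F z in at 0. gser a m z \<noteq> 0 \<and>
      \<delta> * norm (cnj z ^ (2 * nat (int m - l)) * gser a m z / a l)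
        \<le> Re (cnj z ^ (2 * nat (int m - l)) * gser a m z / a l)"
    by eventually_elim (use sector in \<open>auto simp: F_def\<close>)
  then show ?thesis
    using \<open>\<delta> > 0\<close> by blast
qed

lemma satisfies_polynomial_condition_gser:
  assumes "l \<le> int m" "a l \<noteq> 0"
    and "\<And>w. norm w = 1 \<Longrightarrow> Re (1 + (\<Sum>n. pair_coeff a l n * w ^ Suc n)) > 0"
  shows "satisfies_polynomial_condition (gser a m)"
proof -
  from gser_sector_bound[OF assms] obtain \<delta> where "\<delta> > 0" and "\<forall>\<^sub>F z in at 0. gser a m z \<noteq> 0 \<and>
      \<delta> * norm (cnj z ^ (2 * nat (int m - l)) * gser a m z / a l)
        \<le> Re (cnj z ^ (2 * nat (int m - l)) * gser a m z / a l)"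
    by blast
  from polynomial_condition_wrt_sector_poly[OF \<open>a l \<noteq> 0\<close> this(1) smallo_gser this(2)]
  show ?thesis
    unfolding satisfies_polynomial_condition_def
    by (intro conjI even_gser smallo_gser exI[of _ 1] exI[of _ "sector_poly (a l) (2 * nat (int m - l))"]
        holo_poly2_sector_poly C1_on_subset[OF C1_on_gser]) simp_all
qed

end

theorem theorem3p3:
  fixes m :: nat and a :: "int \<Rightarrow> complex"
  assumes m_pos: "m > 0"
    and summ: "(\<lambda>k. norm (of_int k * a k)) summable_on (UNIV :: int set)"
    and conds:
      "(\<exists>l::int. l \<le> int m \<and> norm (a l) > (\<Sum>\<^sub>\<infinity>n\<in>UNIV - {l}. norm (a n)))
       \<or> (\<exists>l::int. l \<le> int m \<and> a l \<noteq> 0 \<and>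
            (\<Sum>n. norm (a (l + int (Suc n)) / a l + cnj (a (l - int (Suc n))) / cnj (a l))) < 1)
       \<or> (\<exists>l::int. l \<le> int m \<and> a l \<noteq> 0 \<and>
            (\<forall>w::complex. norm w = 1 \<longrightarrow>
               Re (1 + (\<Sum>n. (a (l + int (Suc n)) / a l + cnj (a (l - int (Suc n))) / cnj (a l))
                              * w ^ Suc n)) > 0))"
  shows "even_fun (gser a m) \<and> homogeneous_of_degree (2 * m) (gser a m)
         \<and> C1_on UNIV (gser a m) \<and> satisfies_polynomial_condition (gser a m)"
proof -
  obtain l where "l \<le> int m" "a l \<noteq> 0"
    and "\<And>w. norm w = 1 \<Longrightarrow> Re (1 + (\<Sum>n. pair_coeff a l n * w ^ Suc n)) > 0"
    using positivity_condition_if_any[OF summable_norm_of_summable_norm_int_mult[OF summ]] conds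
    unfolding pair_coeff_def[symmetric] by blast
  then show ?thesis
    using even_gser[OF summ m_pos] homogeneous_gser[OF summ m_pos] C1_on_gser[OF summ m_pos]
      satisfies_polynomial_condition_gser[OF summ m_pos] by blast
qed

end
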